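(* In the session calculus, weak fairness of instructions (WI) coincides with justness (J): a path is WI-fair iff it is just.
   Context: Session calculus: threads $P ::= \mathbf{end} \mid \bigoplus_{i\in I} p_i!\lambda_i;P_i \mid \sum_{i\in I} p_i?\lambda_i;P_i \mid X \mid \mu X.P$ (guarded recursion), thread states additionally $\langle q!\lambda\rangle;P$; networks $p[\![P]\!]\mid 0\mid N\parallel N$ with distinct locations and closed threads, modulo associativity/commutativity/unit. Transitions: (choice) $p[\![\bigoplus_{i\in I}p_i!\lambda_i;P_i]\!]\parallel N \xrightarrow{\tau} p[\![\langle p_k!\lambda_k\rangle;P_k]\!]\parallel N$; (unfold) $p[\![\mu X.P]\!]\parallel N\xrightarrow{\tau} p[\![P\{\mu X.P/X\}]\!]\parallel N$; (comm) $p_k[\![\langle q!\lambda_k\rangle;Q]\!]\parallel q[\![\sum_{i\in I}p_i?\lambda_i;P_i]\!]\parallel N \xrightarrow{(p_k,\lambda_k,q)} p_k[\![Q]\!]\parallel q[\![P_k]\!]\parallel N$. $\mathrm{comp}(t)$ is the moving location for a $\tau$-transition and $\{p,q\}$ for label $(p,\lambda,q)$; $t,u$ are concurrent if $\mathrm{comp}(t)\cap\mathrm{comp}(u)=\emptyset$. A path is a network state with a maximal sequence of transitions. Instructions: the occurrences of subexpressions $p_k!\lambda_k$, $p_k?\lambda_k$ or $\mu X$ in the network expression; each $\tau$-transition stems from exactly one instruction and each communication transition from exactly two (output and matching input); $\mathrm{instr}(t)$ is this set. An instruction $I$ is enabled in $N$ if some transition $t$ from $N$ has $I\in\mathrm{instr}(t)$,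 perpetually enabled on a path if enabled in all its states, and engaged in by a path containing such a $t$. A path $\pi$ is WI-fair if for every suffix $\pi'$, every instruction perpetually enabled on $\pi'$ is engaged in by $\pi'$. A path $\pi$ is just if for every suffix starting in state $s$ and every transition $t$ enabled in $s$, that suffix contains a transition $u$ not concurrent with $t$. *)

theory Defs
  imports Main "HOL-Library.Extended_Nat"
begin

text \<open>Threads over locations (participants) 'p, labels 'l and instruction tags 't.
  Every instruction occurrence (an output p!l in an internal choice, an input p?l in an
  external choice, a binder \<mu>X) carries a tag of type 't naming that occurrence.
  Sel bs  = internal choice (+)_{i} p_i!l_i;P_i  (branches: tag, p_i, l_i, P_i)
  Brn bs  = external choice Sum_{i} p_i?l_i;P_i
  Snd i q l P = the thread state <q!l>;P (i is the tag of the output occurrence).\<close>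

datatype ('p, 'l, 't) thr =
    End
  | Sel "('t \<times> 'p \<times> 'l \<times> ('p, 'l, 't) thr) list"
  | Brn "('t \<times> 'p \<times> 'l \<times> ('p, 'l, 't) thr) list"
  | Var nat
  | Mu 't nat "('p, 'l, 't) thr"
  | Snd 't 'p 'l "('p, 'l, 't) thr"

text \<open>Networks: finite partial maps from locations to thread states
  (this represents p1[[P1]] || ... || pn[[Pn]] modulo AC and unit, with distinct locations).\<close>
type_synonym ('p, 'l, 't) net = "'p \<Rightarrow> ('p, 'l, 't) thr option"

fun tags :: "('p, 'l, 't) thr \<Rightarrow> 't list" where
  "tags End = []"
| "tags (Sel bs) = concat (map (\<lambda>(i, q, l, P). i # tags P) bs)"
| "tags (Brn bs) = concat (map (\<lambda>(i, q, l, P). i # tags P) bs)"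
| "tags (Var x) = []"
| "tags (Mu i x P) = i # tags P"
| "tags (Snd i q l P) = i # tags P"

fun fv :: "('p, 'l, 't) thr \<Rightarrow> nat set" where
  "fv End = {}"
| "fv (Sel bs) = (\<Union>(i, q, l, P) \<in> set bs. fv P)"
| "fv (Brn bs) = (\<Union>(i, q, l, P) \<in> set bs. fv P)"
| "fv (Var x) = {x}"
| "fv (Mu i x P) = fv P - {x}"
| "fv (Snd i q l P) = fv P"

fun unguarded :: "('p, 'l, 't) thr \<Rightarrow> nat set" where
  "unguarded End = {}"
| "unguarded (Sel bs) = {}"
| "unguarded (Brn bs) = {}"
| "unguarded (Var x) = {x}"
| "unguarded (Mu i x P) = unguarded P - {x}"
| "unguarded (Snd i q l P) = {}"

fun guarded :: "('p, 'l, 't) thr \<Rightarrow> bool" where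
  "guarded End = True"
| "guarded (Sel bs) = (\<forall>(i, q, l, P) \<in> set bs. guarded P)"
| "guarded (Brn bs) = (\<forall>(i, q, l, P) \<in> set bs. guarded P)"
| "guarded (Var x) = True"
| "guarded (Mu i x P) = (x \<notin> unguarded P \<and> guarded P)"
| "guarded (Snd i q l P) = guarded P"

fun plain :: "('p, 'l, 't) thr \<Rightarrow> bool" where
  "plain End = True"
| "plain (Sel bs) = (\<forall>(i, q, l, P) \<in> set bs. plain P)"
| "plain (Brn bs) = (\<forall>(i, q, l, P) \<in> set bs. plain P)"
| "plain (Var x) = True"
| "plain (Mu i x P) = plain P"
| "plain (Snd i q l P) = False"

definition thread_state :: "('p, 'l, 't) thr \<Rightarrow> bool" where
  "thread_state P \<longleftrightarrow> plain P \<or> (\<exists>i q l Q. P = Snd i q l Q \<and> plain Q)"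

text \<open>Substitution P{Q/X} (only used with closed Q, so no capture).\<close>
fun subst :: "nat \<Rightarrow> ('p, 'l, 't) thr \<Rightarrow> ('p, 'l, 't) thr \<Rightarrow> ('p, 'l, 't) thr" where
  "subst x Q End = End"
| "subst x Q (Sel bs) = Sel (map (\<lambda>(i, q, l, P). (i, q, l, subst x Q P)) bs)"
| "subst x Q (Brn bs) = Brn (map (\<lambda>(i, q, l, P). (i, q, l, subst x Q P)) bs)"
| "subst x Q (Var y) = (if y = x then Q else Var y)"
| "subst x Q (Mu i y P) = (if y = x then Mu i y P else Mu i y (subst x Q P))"
| "subst x Q (Snd i q l P) = Snd i q l (subst x Q P)"

datatype ('p, 'l) act = Tau 'p | Com 'p 'l 'p

fun comp :: "('p, 'l) act \<Rightarrow> 'p set" where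
  "comp (Tau p) = {p}"
| "comp (Com p l q) = {p, q}"

text \<open>step N a J N': a transition from N with action a, stemming from the set J of
  instructions (tags), leading to N'.\<close>
inductive step :: "('p, 'l, 't) net \<Rightarrow> ('p, 'l) act \<Rightarrow> 't set \<Rightarrow> ('p, 'l, 't) net \<Rightarrow> bool" where
  choice: "\<lbrakk> N p = Some (Sel bs); k < length bs; bs ! k = (i, q, l, P) \<rbrakk>
           \<Longrightarrow> step N (Tau p) {i} (N(p \<mapsto> Snd i q l P))"
| unfold: "N p = Some (Mu i x P)
           \<Longrightarrow> step N (Tau p) {i} (N(p \<mapsto> subst x (Mu i x P) P))"
| comm: "\<lbrakk> p \<noteq> q; N p = Some (Snd i q l Q); N q = Some (Brn bs); k < length bs;
           bs ! k = (j, p, l, P) \<rbrakk>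
           \<Longrightarrow> step N (Com p l q) {i, j} (N(p \<mapsto> Q, q \<mapsto> P))"

text \<open>A network state: finitely many located, closed, guarded thread states, and each
  instruction occurrence carries its own tag (tags are pairwise distinct, within a thread
  and across locations), so that tags name the occurrences of the network expression.\<close>
definition wf_net :: "('p, 'l, 't) net \<Rightarrow> bool" where
  "wf_net N \<longleftrightarrow> finite (dom N)
     \<and> (\<forall>p P. N p = Some P \<longrightarrow> thread_state P \<and> fv P = {} \<and> guarded P \<and> distinct (tags P))
     \<and> (\<forall>p q P Q. p \<noteq> q \<longrightarrow> N p = Some P \<longrightarrow> N q = Some Q \<longrightarrow> set (tags P) \<inter> set (tags Q) = {})"

text \<open>A path: states s 0, s 1, ... and transitions tr i = (action, instructions) from s i to
  s (Suc i), for i < n (n = \<infinity> for infinite paths); maximal: if n is finite, then no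
  transition is possible from the last state.\<close>
definition is_path :: "(nat \<Rightarrow> ('p, 'l, 't) net) \<Rightarrow> (nat \<Rightarrow> ('p, 'l) act \<times> 't set) \<Rightarrow> enat \<Rightarrow> bool" where
  "is_path s tr n \<longleftrightarrow>
     (\<forall>i. enat i < n \<longrightarrow> step (s i) (fst (tr i)) (snd (tr i)) (s (Suc i)))
   \<and> (\<forall>m. n = enat m \<longrightarrow> \<not> (\<exists>a J N'. step (s m) a J N'))"

definition enabled :: "'t \<Rightarrow> ('p, 'l, 't) net \<Rightarrow> bool" where
  "enabled I N \<longleftrightarrow> (\<exists>a J N'. step N a J N' \<and> I \<in> J)"

definition perp_enabled :: "(nat \<Rightarrow> ('p, 'l, 't) net) \<Rightarrow> enat \<Rightarrow> nat \<Rightarrow> 't \<Rightarrow> bool" where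
  "perp_enabled s n k I \<longleftrightarrow> (\<forall>j. k \<le> j \<longrightarrow> enat j \<le> n \<longrightarrow> enabled I (s j))"

definition engaged :: "(nat \<Rightarrow> ('p, 'l) act \<times> 't set) \<Rightarrow> enat \<Rightarrow> nat \<Rightarrow> 't \<Rightarrow> bool" where
  "engaged tr n k I \<longleftrightarrow> (\<exists>j. k \<le> j \<and> enat j < n \<and> I \<in> snd (tr j))"

definition WI_fair :: "(nat \<Rightarrow> ('p, 'l, 't) net) \<Rightarrow> (nat \<Rightarrow> ('p, 'l) act \<times> 't set) \<Rightarrow> enat \<Rightarrow> bool" where
  "WI_fair s tr n \<longleftrightarrow>
     (\<forall>k. enat k \<le> n \<longrightarrow> (\<forall>I. perp_enabled s n k I \<longrightarrow> engaged tr n k I))"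

definition just :: "(nat \<Rightarrow> ('p, 'l, 't) net) \<Rightarrow> (nat \<Rightarrow> ('p, 'l) act \<times> 't set) \<Rightarrow> enat \<Rightarrow> bool" where
  "just s tr n \<longleftrightarrow>
     (\<forall>k. enat k \<le> n \<longrightarrow> (\<forall>a J N'. step (s k) a J N' \<longrightarrow>
        (\<exists>j. k \<le> j \<and> enat j < n \<and> comp (fst (tr j)) \<inter> comp a \<noteq> {})))"

end

theory Submission
  imports Defs
begin

text \<open>Since the tags at every location of a reachable state are among those it held initially,
  each instruction lives at one fixed location, and any transition engaging it moves that location.

  WI-fairness implies justness: a transition that no later transition interferes with stays
  enabled, so its instructions are perpetually enabled and must be engaged by a later transition,
  which then shares a location with it.

  Justness implies WI-fairness: a perpetually enabled instruction that is never engaged pins its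
  location p, because any other move of p removes the instruction from the top of p's thread. On a
  just path, however, a location that can move in every state eventually moves. For a tau-step this
  is justness itself; if p is the receiver of a communication, its sender waits for p and never
  moves either; and if p outputs to q, then q keeps offering an external choice whose thread shrinks with every move of q,
  so q eventually stops moving, contradicting justness.\<close>

fun top_tags :: "('p, 'l, 't) thr \<Rightarrow> 't set" where
  "top_tags (Sel bs) = fst ` set bs"
| "top_tags (Brn bs) = fst ` set bs"
| "top_tags (Mu i x P) = {i}"
| "top_tags (Snd i q l P) = {i}"
| "top_tags End = {}"
| "top_tags (Var x) = {}"

text \<open>Unfolding a binder for x puts the binder's tag on top of every branch that continues
  with x; these are the tags of the choices owning such branches.\<close>
fun guard_tags :: "nat \<Rightarrow> ('p, 'l, 't) thr \<Rightarrow> 't set" where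
  "guard_tags x End = {}"
| "guard_tags x (Sel bs) = (\<Union>(i, q, l, P) \<in> set bs. guard_tags x P)"
| "guard_tags x (Brn bs) = (if (\<exists>(i, q, l, P) \<in> set bs. P = Var x) then fst ` set bs else {})
                   \<union> (\<Union>(i, q, l, P) \<in> set bs. guard_tags x P)"
| "guard_tags x (Var y) = {}"
| "guard_tags x (Mu i y P) = (if y = x then {} else guard_tags x P)"
| "guard_tags x (Snd i q l P) = guard_tags x P"

text \<open>Unfolding may duplicate tags, so distinctness of tags is not preserved; this weaker property is,
  thanks to the side condition on binders.\<close>
fun coherent :: "('p, 'l, 't) thr \<Rightarrow> bool" where
  "coherent End = True"
| "coherent (Sel bs) = (\<forall>(i, q, l, P) \<in> set bs. coherent P)"
| "coherent (Brn bs) = (\<forall>(i, q, l, P) \<in> set bs. fst ` set bs \<inter> top_tags P = {} \<and> coherent P)"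
| "coherent (Var x) = True"
| "coherent (Mu i x P) = (i \<notin> guard_tags x P \<and> coherent P)"
| "coherent (Snd i q l P) = coherent P"

lemma set_tags_branches:
  "set (concat (map (\<lambda>(i, q, l, P). i # tags P) bs)) = (\<Union>(i, q, l, P) \<in> set bs. insert i (set (tags P)))"
  by (induct bs) auto

lemma tags_Sel_branch: "(i, q, l, P) \<in> set bs \<Longrightarrow> insert i (set (tags P)) \<subseteq> set (tags (Sel bs))"
  unfolding tags.simps set_tags_branches by blast

lemma tags_Brn_branch: "(i, q, l, P) \<in> set bs \<Longrightarrow> insert i (set (tags P)) \<subseteq> set (tags (Brn bs))"
  unfolding tags.simps set_tags_branches by blast

lemma ball_branchesI:
  "(\<And>i q l P. (i, q, l, P) \<in> set bs \<Longrightarrow> F i q l P) \<Longrightarrow> \<forall>(i, q, l, P) \<in> set bs. F i q l P"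
  by auto

lemma ball_map_subst_branches:
  "(\<forall>(i, q, l, P) \<in> set (map (\<lambda>(i, q, l, P). (i, q, l, subst x M P)) bs). F i q l P)
   \<longleftrightarrow> (\<forall>(i, q, l, P) \<in> set bs. F i q l (subst x M P))"
  by auto

lemma ball_branchesD:
  "\<forall>(i, q, l, P) \<in> set bs. F i q l P \<Longrightarrow> (i, q, l, P) \<in> set bs \<Longrightarrow> F i q l P"
  by auto

lemma UN_branches_iff:
  "a \<in> (\<Union>(i, q, l, P) \<in> set bs. F i q l P) \<longleftrightarrow> (\<exists>i q l P. (i, q, l, P) \<in> set bs \<and> a \<in> F i q l P)"
  by auto

lemma UN_branches_mono:
  assumes "\<And>i q l P. (i, q, l, P) \<in> set bs \<Longrightarrow> F i q l P \<subseteq> G i q l P"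
  shows "(\<Union>(i, q, l, P) \<in> set bs. F i q l P) \<subseteq> (\<Union>(i, q, l, P) \<in> set bs. G i q l P)"
proof (rule UN_mono[OF order_refl])
  fix b assume b: "b \<in> set bs"
  obtain i q l P where "b = (i, q, l, P)" by (cases b)
  with b show "(case b of (i, q, l, P) \<Rightarrow> F i q l P) \<subseteq> (case b of (i, q, l, P) \<Rightarrow> G i q l P)"
    using assms by simp
qed

lemma mem_map_subst_branches:
  "(i, q, l, P') \<in> set (map (\<lambda>(i, q, l, P). (i, q, l, subst x M P)) bs)
   \<Longrightarrow> \<exists>P. (i, q, l, P) \<in> set bs \<and> P' = subst x M P"
  by auto

lemma fst_map_subst_branches: "fst ` set (map (\<lambda>(i, q, l, P). (i, q, l, subst x M P)) bs) = fst ` set bs"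
  by (auto simp: image_image case_prod_beta)

lemma UN_map_subst_branches:
  "(\<Union>(i, q, l, P) \<in> set (map (\<lambda>(i, q, l, P). (i, q, l, subst x M P)) bs). F i q l P)
   = (\<Union>(i, q, l, P) \<in> set bs. F i q l (subst x M P))"
  by (auto simp: image_image case_prod_beta)

lemma fv_Sel_branch: "(i, q, l, P) \<in> set bs \<Longrightarrow> fv P \<subseteq> fv (Sel bs)"
  unfolding fv.simps UN_branches_iff by blast

lemma fv_Brn_branch: "(i, q, l, P) \<in> set bs \<Longrightarrow> fv P \<subseteq> fv (Brn bs)"
  unfolding fv.simps UN_branches_iff by blast

lemma size_Brn_branch: "(i, q, l, P) \<in> set bs \<Longrightarrow> size P < size (Brn bs)"
  by (induct bs) auto

lemma top_tags_subset_tags: "top_tags T \<subseteq> set (tags T)"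
proof (cases T)
  case (Sel bs)
  show ?thesis
  proof
    fix a assume "a \<in> top_tags T"
    then obtain i q l P where b: "(i, q, l, P) \<in> set bs" "a = i" using Sel by auto
    then show "a \<in> set (tags T)" using tags_Sel_branch[OF b(1)] Sel by blast
  qed
next
  case (Brn bs)
  show ?thesis
  proof
    fix a assume "a \<in> top_tags T"
    then obtain i q l P where b: "(i, q, l, P) \<in> set bs" "a = i" using Brn by auto
    then show "a \<in> set (tags T)" using tags_Brn_branch[OF b(1)] Brn by blast
  qed
qed auto

lemma guard_tags_subset_tags: "guard_tags x T \<subseteq> set (tags T)"
proof (induction x T rule: guard_tags.induct)
  case (2 x bs)
  show ?case
  proof
    fix a assume "a \<in> guard_tags x (Sel bs)"
    then obtain i q l P where b: "(i, q, l, P) \<in> set bs" "a \<in> guard_tags x P" by auto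
    then show "a \<in> set (tags (Sel bs))" using 2 tags_Sel_branch[OF b(1)] by blast
  qed
next
  case (3 x bs)
  show ?case
  proof
    fix a assume "a \<in> guard_tags x (Brn bs)"
    then consider "a \<in> fst ` set bs" | i q l P where "(i, q, l, P) \<in> set bs" "a \<in> guard_tags x P"
      by (auto split: if_splits)
    then show "a \<in> set (tags (Brn bs))"
    proof cases
      case 1
      then obtain i q l P where b: "(i, q, l, P) \<in> set bs" "a = i" by auto
      then show ?thesis using tags_Brn_branch[OF b(1)] by blast
    next
      case (2 i q l P)
      then show ?thesis using 3 tags_Brn_branch[OF 2(1)] by blast
    qed
  qed
qed auto

lemma guard_tags_not_free: "x \<notin> fv T \<Longrightarrow> guard_tags x T = {}"
proof (induction x T rule: guard_tags.induct)
  case (2 x bs)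
  then show ?case by fastforce
next
  case (3 x bs)
  have "\<not> (\<exists>(i, q, l, P) \<in> set bs. P = Var x)" using 3(2) by force
  moreover have "\<forall>(i, q, l, P) \<in> set bs. guard_tags x P = {}" using 3 by fastforce
  ultimately show ?case by auto
qed auto

lemma top_tags_subst: "top_tags (subst x M P) = (if P = Var x then top_tags M else top_tags P)"
  by (cases P) (auto simp: image_image case_prod_beta)

lemma fv_subst: "fv M = {} \<Longrightarrow> fv (subst x M P) = fv P - {x}"
proof (induction x M P rule: subst.induct)
  case (2 x bs)
  then show ?case by fastforce
next
  case (3 x bs)
  then show ?case by fastforce
qed auto

lemma subst_eq_Var: "fv M = {} \<Longrightarrow> subst x M P = Var y \<Longrightarrow> P = Var y"
  by (cases P) (auto split: if_splits)

lemma tags_subst: "set (tags (subst x M P)) \<subseteq> set (tags M) \<union> set (tags P)"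
proof (induction x M P rule: subst.induct)
  case (2 x M bs)
  show ?case
  proof
    fix a assume "a \<in> set (tags (subst x M (Sel bs)))"
    then obtain i q l P where b: "(i, q, l, P) \<in> set bs" "a \<in> insert i (set (tags (subst x M P)))"
      by (simp only: subst.simps tags.simps set_tags_branches UN_map_subst_branches UN_branches_iff) blast
    show "a \<in> set (tags M) \<union> set (tags (Sel bs))"
      using b(2) "2.IH"[OF b(1) refl refl refl] tags_Sel_branch[OF b(1)] by blast
  qed
next
  case (3 x M bs)
  show ?case
  proof
    fix a assume "a \<in> set (tags (subst x M (Brn bs)))"
    then obtain i q l P where b: "(i, q, l, P) \<in> set bs" "a \<in> insert i (set (tags (subst x M P)))"
      by (simp only: subst.simps tags.simps set_tags_branches UN_map_subst_branches UN_branches_iff) blast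
    show "a \<in> set (tags M) \<union> set (tags (Brn bs))"
      using b(2) "3.IH"[OF b(1) refl refl refl] tags_Brn_branch[OF b(1)] by blast
  qed
qed auto

lemma guard_tags_subst: "y \<noteq> x \<Longrightarrow> fv M = {} \<Longrightarrow> guard_tags y (subst x M Q) \<subseteq> guard_tags y Q"
proof (induction x M Q rule: subst.induct)
  case (2 x M bs)
  have "guard_tags y (subst x M (Sel bs)) = (\<Union>(i, q, l, P) \<in> set bs. guard_tags y (subst x M P))"
    by (simp only: subst.simps guard_tags.simps UN_map_subst_branches)
  also have "\<dots> \<subseteq> (\<Union>(i, q, l, P) \<in> set bs. guard_tags y P)"
    by (rule UN_branches_mono) (rule "2.IH"[OF _ refl refl refl]; use 2 in auto)
  finally show ?case by simp
next
  case (3 x M bs)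
  have var: "\<exists>(i, q, l, P) \<in> set bs. P = Var y"
    if "\<exists>(i, q, l, P) \<in> set (map (\<lambda>(i, q, l, P). (i, q, l, subst x M P)) bs). P = Var y"
  proof -
    from that obtain i q l P' where b: "(i, q, l, P') \<in> set (map (\<lambda>(i, q, l, P). (i, q, l, subst x M P)) bs)"
      "P' = Var y" by blast
    obtain P where "(i, q, l, P) \<in> set bs" "P' = subst x M P" using mem_map_subst_branches[OF b(1)] by blast
    then show ?thesis using subst_eq_Var[OF 3(3)] b(2) by fastforce
  qed
  have "(\<Union>(i, q, l, P) \<in> set bs. guard_tags y (subst x M P)) \<subseteq> (\<Union>(i, q, l, P) \<in> set bs. guard_tags y P)"
    by (rule UN_branches_mono) (rule "3.IH"[OF _ refl refl refl]; use 3 in auto)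
  then show ?case using var
    by (simp only: subst.simps guard_tags.simps UN_map_subst_branches fst_map_subst_branches)
      (auto split: if_splits)
next
  case (4 x M z)
  then show ?case using guard_tags_not_free[of y M] by auto
qed auto

lemma coherent_subst:
  assumes "coherent M" "fv M = {}" "top_tags M \<subseteq> A" "coherent Q" "A \<inter> guard_tags x Q = {}"
  shows "coherent (subst x M Q)"
  using assms
proof (induction x M Q rule: subst.induct)
  case (2 x M bs)
  have "coherent (subst x M P)" if b: "(i, q, l, P) \<in> set bs" for i q l P
    by (rule "2.IH"[OF b refl refl refl]) (use 2 b in auto)
  then show ?case by (simp only: subst.simps coherent.simps ball_map_subst_branches) auto
next
  case (3 x M bs)
  have branch: "fst ` set bs \<inter> top_tags (subst x M P) = {} \<and> coherent (subst x M P)"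
    if b: "(i, q, l, P) \<in> set bs" for i q l P
  proof
    show "coherent (subst x M P)"
      by (rule "3.IH"[OF b refl refl refl]) (use 3 b in auto)
    show "fst ` set bs \<inter> top_tags (subst x M P) = {}"
    proof (cases "P = Var x")
      case True
      then have "fst ` set bs \<subseteq> guard_tags x (Brn bs)" using b by force
      then show ?thesis using True 3(4,6) by (auto simp: top_tags_subst)
    next
      case False
      then show ?thesis using ball_branchesD[OF 3(5)[unfolded coherent.simps] b] by (simp add: top_tags_subst)
    qed
  qed
  show ?case
    by (simp only: subst.simps coherent.simps ball_map_subst_branches fst_map_subst_branches)
      (rule ball_branchesI, erule branch)
next
  case (5 x M i y P)
  show ?case
  proof (cases "y = x")
    case False
    have "coherent (subst x M P)" using 5 False by auto
    moreover have "i \<notin> guard_tags y (subst x M P)" using 5(5) guard_tags_subst[OF False 5(3)] False by auto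
    ultimately show ?thesis using False by simp
  qed (use 5 in simp)
qed auto

lemma distinct_branch_tags:
  assumes "distinct (concat (map (\<lambda>(i, q, l, P). i # tags P) bs))" "(i, q, l, P) \<in> set bs"
  shows "distinct (tags P) \<and> fst ` set bs \<inter> set (tags P) = {}"
proof
  let ?f = "\<lambda>(i, q, l, P). i # tags P"
  have fb: "i # tags P \<in> set (map ?f bs)" using assms(2) by force
  then have dP: "distinct (i # tags P)" using assms(1) unfolding distinct_concat_iff by blast
  then show "distinct (tags P)" by simp
  show "fst ` set bs \<inter> set (tags P) = {}"
  proof (rule ccontr)
    assume "fst ` set bs \<inter> set (tags P) \<noteq> {}"
    then obtain i' q' l' P' where b': "(i', q', l', P') \<in> set bs" "i' \<in> set (tags P)" by force
    have fb': "i' # tags P' \<in> set (map ?f bs)" using b'(1) by force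
    show False
    proof (cases "i # tags P = i' # tags P'")
      case True
      then show False using dP b'(2) by simp
    next
      case False
      then have "set (i # tags P) \<inter> set (i' # tags P') = {}"
        using assms(1) fb fb' unfolding distinct_concat_iff by blast
      then show False using b'(2) by auto
    qed
  qed
qed

lemma distinct_tags_coherent: "distinct (tags T) \<Longrightarrow> coherent T"
proof (induction T rule: coherent.induct)
  case (2 bs)
  have "coherent P" if b: "(i, q, l, P) \<in> set bs" for i q l P
    using "2.IH"[OF b refl refl refl] distinct_branch_tags[OF 2(2)[unfolded tags.simps] b] by blast
  then show ?case by auto
next
  case (3 bs)
  have branch: "fst ` set bs \<inter> top_tags P = {} \<and> coherent P" if b: "(i, q, l, P) \<in> set bs" for i q l P
    using "3.IH"[OF b refl refl refl] distinct_branch_tags[OF 3(2)[unfolded tags.simps] b]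
      top_tags_subset_tags[of P] by blast
  show ?case by (simp only: coherent.simps) (rule ball_branchesI, erule branch)
next
  case (5 i x P)
  then show ?case using guard_tags_subset_tags[of x P] by auto
qed auto

definition reachable_inv :: "('p, 'l, 't) net \<Rightarrow> ('p, 'l, 't) net \<Rightarrow> bool" where
  "reachable_inv N0 N \<longleftrightarrow> (\<forall>p T. N p = Some T \<longrightarrow>
     (\<exists>T0. N0 p = Some T0 \<and> set (tags T) \<subseteq> set (tags T0)) \<and> coherent T \<and> fv T = {})"

lemma reachable_inv_init: "wf_net N0 \<Longrightarrow> reachable_inv N0 N0"
  unfolding wf_net_def reachable_inv_def using distinct_tags_coherent by blast

lemma step_reachable_inv: "step N a J N' \<Longrightarrow> reachable_inv N0 N \<Longrightarrow> reachable_inv N0 N'"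
proof (induction rule: step.induct)
  case (choice N p bs k i q l P)
  have b: "(i, q, l, P) \<in> set bs" using choice(2,3) nth_mem by metis
  obtain T0 where T0: "N0 p = Some T0" "set (tags (Sel bs)) \<subseteq> set (tags T0)"
    and coh: "coherent (Sel bs)" and fv: "fv (Sel bs) = {}"
    using choice(1,4) unfolding reachable_inv_def by blast
  have "insert i (set (tags P)) \<subseteq> set (tags T0)" using tags_Sel_branch[OF b] T0(2) by (rule subset_trans)
  moreover have "coherent P" using coh b by auto
  moreover have "fv P = {}" using fv fv_Sel_branch[OF b] by simp
  ultimately show ?case using choice(4) T0(1) unfolding reachable_inv_def by auto
next
  case (unfold N p i x P)
  obtain T0 where T0: "N0 p = Some T0" "set (tags (Mu i x P)) \<subseteq> set (tags T0)"
    and coh: "coherent (Mu i x P)" and fv: "fv (Mu i x P) = {}"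
    using unfold unfolding reachable_inv_def by blast
  have "set (tags (subst x (Mu i x P) P)) \<subseteq> set (tags T0)"
    using tags_subst[of x "Mu i x P" P] T0(2) by auto
  moreover have "coherent (subst x (Mu i x P) P)"
    by (rule coherent_subst[where A = "{i}"]) (use coh fv in auto)
  moreover have "fv (subst x (Mu i x P) P) = {}" using fv_subst[OF fv] fv by simp
  ultimately show ?case using unfold(2) T0(1) unfolding reachable_inv_def by auto
next
  case (comm p q N i l Q bs k j P)
  have b: "(j, p, l, P) \<in> set bs" using comm(4,5) nth_mem by metis
  obtain T0 where T0: "N0 p = Some T0" "set (tags (Snd i q l Q)) \<subseteq> set (tags T0)"
    and "coherent (Snd i q l Q)" "fv (Snd i q l Q) = {}"
    using comm unfolding reachable_inv_def by blast
  moreover obtain T1 where T1: "N0 q = Some T1" "set (tags (Brn bs)) \<subseteq> set (tags T1)"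
    and coh: "coherent (Brn bs)" and fv: "fv (Brn bs) = {}"
    using comm unfolding reachable_inv_def by blast
  moreover have "insert j (set (tags P)) \<subseteq> set (tags T1)"
    using tags_Brn_branch[OF b] T1(2) by (rule subset_trans)
  moreover have "coherent P" using coh b by auto
  moreover have "fv P = {}" using fv fv_Brn_branch[OF b] by simp
  ultimately show ?case using comm(6) unfolding reachable_inv_def by auto
qed

lemma reachable_tag_location_unique:
  assumes "wf_net N0" "reachable_inv N0 N" "reachable_inv N0 N'" "N p = Some T" "N' p' = Some T'"
    "I \<in> set (tags T)" "I \<in> set (tags T')"
  shows "p = p'"
proof (rule ccontr)
  assume "p \<noteq> p'"
  obtain T0 T1 where "N0 p = Some T0" "set (tags T) \<subseteq> set (tags T0)"
    "N0 p' = Some T1" "set (tags T') \<subseteq> set (tags T1)"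
    using assms(2-5) unfolding reachable_inv_def by blast
  then show False using assms(1,6,7) \<open>p \<noteq> p'\<close> unfolding wf_net_def by blast
qed

lemma step_untouched: "step N a J N' \<Longrightarrow> p \<notin> comp a \<Longrightarrow> N' p = N p"
  by (induction rule: step.induct) auto

lemma step_instrs_nonempty: "step N a J N' \<Longrightarrow> J \<noteq> {}"
  by (induction rule: step.induct) auto

lemma step_instr_top: "step N a J N' \<Longrightarrow> I \<in> J \<Longrightarrow> \<exists>p \<in> comp a. \<exists>T. N p = Some T \<and> I \<in> top_tags T"
proof (induction rule: step.induct)
  case (choice N p bs k i q l P)
  then have "i \<in> fst ` set bs" using nth_mem by force
  then show ?case using choice by auto
next
  case (comm p q N i l Q bs k j P)
  then have "j \<in> fst ` set bs" using nth_mem by force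
  then show ?case using comm by auto
qed auto

lemma step_local: "step N a J N' \<Longrightarrow> \<forall>p \<in> comp a. M p = N p \<Longrightarrow> \<exists>M'. step M a J M'"
proof (induction rule: step.induct)
  case (choice N p bs k i q l P)
  then show ?case using step.choice[of M p bs k i q l P] by auto
next
  case (unfold N p i x P)
  then show ?case using step.unfold[of M p i x P] by auto
next
  case (comm p q N i l Q bs k j P)
  then show ?case using step.comm[of p q M i l Q bs k j P] by auto
qed

lemma step_Snd_partner:
  "step N a J N' \<Longrightarrow> N p = Some (Snd i q l Q) \<Longrightarrow> p \<in> comp a \<Longrightarrow> comp a = {p, q} \<and> (\<exists>bs. N q = Some (Brn bs))"
  by (induction rule: step.induct) auto

lemma step_Brn_shrinks:
  "step N a J N' \<Longrightarrow> N q = Some (Brn bs) \<Longrightarrow> q \<in> comp a \<Longrightarrow> \<exists>P. N' q = Some P \<and> size P < size (Brn bs)"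
proof (induction rule: step.induct)
  case (comm p q' N i l Q bs' k j P)
  then have "(j, p, l, P) \<in> set bs'" using nth_mem by metis
  then show ?case using comm size_Brn_branch by fastforce
qed auto

text \<open>Coherence is needed for the receiver of a communication.\<close>
lemma step_drops_top_tag:
  assumes "step N a J N'" "coherent T" "N p = Some T" "I \<in> top_tags T" "I \<notin> J" "p \<in> comp a"
    "N' p = Some T'"
  shows "I \<notin> top_tags T'"
  using assms
proof (induction rule: step.induct)
  case (comm p' q N i l Q bs k j P)
  show ?case
  proof (cases "p = p'")
    case False
    then have "T = Brn bs" "T' = P" using comm by auto
    moreover have "(j, p', l, P) \<in> set bs" using comm(4,5) nth_mem by metis
    ultimately have "fst ` set bs \<inter> top_tags T' = {}"
      using ball_branchesD[OF comm(6)[unfolded \<open>T = Brn bs\<close> coherent.simps]] by blast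
    then show ?thesis using comm(8) \<open>T = Brn bs\<close> by auto
  qed (use comm in auto)
qed auto

lemma step_instr_location:
  assumes "wf_net N0" "reachable_inv N0 N" "reachable_inv N0 M" "M p = Some T" "I \<in> set (tags T)"
    "step N a J N'" "I \<in> J"
  shows "p \<in> comp a \<and> (\<exists>T'. N p = Some T' \<and> I \<in> top_tags T')"
proof -
  obtain p' T' where "p' \<in> comp a" "N p' = Some T'" "I \<in> top_tags T'"
    using step_instr_top[OF assms(6,7)] by blast
  moreover have "I \<in> set (tags T')" using top_tags_subset_tags \<open>I \<in> top_tags T'\<close> ..
  then have "p' = p"
    using reachable_tag_location_unique[OF assms(1-3) \<open>N p' = Some T'\<close> assms(4)] assms(5) by blast
  ultimately show ?thesis by blast
qed

lemma path_step: "is_path s tr n \<Longrightarrow> enat j < n \<Longrightarrow> step (s j) (fst (tr j)) (snd (tr j)) (s (Suc j))"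
  unfolding is_path_def by blast

lemma path_reachable_inv:
  assumes "wf_net (s 0)" "is_path s tr n" "enat j \<le> n"
  shows "reachable_inv (s 0) (s j)"
  using assms(3)
proof (induction j)
  case 0
  then show ?case using reachable_inv_init[OF assms(1)] by simp
next
  case (Suc j)
  then have "enat j < n" using Suc_ile_eq by blast
  then show ?case using Suc step_reachable_inv[OF path_step[OF assms(2)]] by auto
qed

lemma path_untouched:
  assumes "is_path s tr n" "k \<le> j" "enat j \<le> n" "\<And>i. k \<le> i \<Longrightarrow> i < j \<Longrightarrow> p \<notin> comp (fst (tr i))"
  shows "s j p = s k p"
  using assms(2-4)
proof (induction j rule: dec_induct)
  case (step j)
  then have "enat j < n" using Suc_ile_eq by blast
  then show ?case using step step_untouched[OF path_step[OF assms(1)]] by auto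
qed simp

lemma WI_fair_imp_just:
  assumes wf: "wf_net (s 0)" and path: "is_path s tr n" and fair: "WI_fair s tr n"
  shows "just s tr n"
  unfolding just_def
proof (intro allI impI)
  fix k a J N'
  assume k: "enat k \<le> n" and st: "step (s k) a J N'"
  show "\<exists>j\<ge>k. enat j < n \<and> comp (fst (tr j)) \<inter> comp a \<noteq> {}"
  proof (rule ccontr)
    assume "\<not> ?thesis"
    then have disjoint: "\<And>j. k \<le> j \<Longrightarrow> enat j < n \<Longrightarrow> comp (fst (tr j)) \<inter> comp a = {}" by blast
    have still_enabled: "\<exists>M'. step (s j) a J M'" if "k \<le> j" "enat j \<le> n" for j
    proof (rule step_local[OF st], intro ballI)
      fix p assume "p \<in> comp a"
      show "s j p = s k p"
      proof (rule path_untouched[OF path that])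
        fix i assume "k \<le> i" "i < j"
        have "enat i < n" using \<open>i < j\<close> that(2) by (metis enat_ord_simps(2) less_le_trans)
        then show "p \<notin> comp (fst (tr i))" using disjoint \<open>k \<le> i\<close> \<open>p \<in> comp a\<close> by blast
      qed

    qed
    obtain I where "I \<in> J" using step_instrs_nonempty[OF st] by blast
    then have "perp_enabled s n k I"
      unfolding perp_enabled_def enabled_def using still_enabled by blast
    then obtain j where j: "k \<le> j" "enat j < n" "I \<in> snd (tr j)"
      using fair k unfolding WI_fair_def engaged_def by blast
    obtain p T where p: "p \<in> comp a" "s k p = Some T" "I \<in> top_tags T"
      using step_instr_top[OF st \<open>I \<in> J\<close>] by blast
    have inv: "reachable_inv (s 0) (s j)" "reachable_inv (s 0) (s k)"
      using path_reachable_inv[OF wf path] j(2) k by auto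
    have "I \<in> set (tags T)" using top_tags_subset_tags p(3) ..
    then have "p \<in> comp (fst (tr j))"
      using step_instr_location[OF wf inv p(2) _ path_step[OF path j(2)] j(3)] by blast
    then show False using disjoint[OF j(1,2)] p(1) by blast
  qed
qed

lemma path_infinite_step: "is_path s tr \<infinity> \<Longrightarrow> step (s j) (fst (tr j)) (snd (tr j)) (s (Suc j))"
  by (simp add: path_step)

lemma just_infiniteD: "just s tr \<infinity> \<Longrightarrow> step (s k) a J N' \<Longrightarrow> \<exists>j\<ge>k. comp (fst (tr j)) \<inter> comp a \<noteq> {}"
  unfolding just_def by (metis enat_ord_simps(3,4))

lemma nat_nonincreasing_eventually_const:
  fixes f :: "nat \<Rightarrow> nat"
  assumes "\<And>j. k \<le> j \<Longrightarrow> f (Suc j) \<le> f j"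
  shows "\<exists>m\<ge>k. \<forall>j\<ge>m. f j = f m"
proof -
  have antimono: "f j \<le> f i" if "k \<le> i" "i \<le> j" for i j
    using that(2) by (induction j rule: dec_induct) (use assms that(1) in \<open>auto intro: order_trans\<close>)
  define v where "v = (LEAST v. \<exists>j\<ge>k. f j = v)"
  obtain m where m: "m \<ge> k" "f m = v"
    using LeastI_ex[of "\<lambda>v. \<exists>j\<ge>k. f j = v"] unfolding v_def by blast
  have "f j = f m" if "j \<ge> m" for j
  proof (rule antisym)
    show "f j \<le> f m" using antimono[OF m(1) that] .
    show "f m \<le> f j" unfolding m(2) v_def using that m(1) by (intro Least_le exI[of _ j]) auto
  qed
  then show ?thesis using m(1) by blast
qed

lemma just_sender_moves:
  assumes path: "is_path s tr \<infinity>" and just: "just s tr \<infinity>"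
    and enabled: "\<And>j. k \<le> j \<Longrightarrow> \<exists>a J N'. step (s j) a J N' \<and> p \<in> comp a"
    and sender: "s k p = Some (Snd i q l Q)"
  shows "\<exists>j\<ge>k. p \<in> comp (fst (tr j))"
proof (rule ccontr)
  assume "\<not> ?thesis"
  then have idle: "\<And>j. k \<le> j \<Longrightarrow> p \<notin> comp (fst (tr j))" by blast
  have partner: "comp a = {p, q} \<and> (\<exists>bs. s j q = Some (Brn bs))"
    if "k \<le> j" "step (s j) a J N'" "p \<in> comp a" for j a J N'
  proof -
    have "s j p = s k p" using path_untouched[OF path that(1) _ idle] by simp
    then show ?thesis using step_Snd_partner[OF that(2) _ that(3)] sender by simp
  qed
  define size_q where "size_q j = size (the (s j q))" for j
  have shrinks: "size_q (Suc j) < size_q j" if j: "k \<le> j" and moves: "q \<in> comp (fst (tr j))" for j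
  proof -
    obtain bs where "s j q = Some (Brn bs)" using enabled[OF j] partner[OF j] by blast
    then show ?thesis
      using step_Brn_shrinks[OF path_infinite_step[OF path] _ moves] unfolding size_q_def by fastforce
  qed
  have "size_q (Suc j) \<le> size_q j" if "k \<le> j" for j
  proof (cases "q \<in> comp (fst (tr j))")
    case False
    then show ?thesis using step_untouched[OF path_infinite_step[OF path]] unfolding size_q_def by simp
  qed (use shrinks[OF that] in simp)
  then obtain m where m: "m \<ge> k" "\<And>j. j \<ge> m \<Longrightarrow> size_q j = size_q m"
    using nat_nonincreasing_eventually_const by blast
  obtain a J N' where st: "step (s m) a J N'" "p \<in> comp a" using enabled m(1) by blast
  obtain j where j: "j \<ge> m" "comp (fst (tr j)) \<inter> comp a \<noteq> {}"
    using just_infiniteD[OF just st(1)] by blast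
  then have "q \<in> comp (fst (tr j))" using partner[OF m(1) st] idle m(1) by auto
  then have "size_q (Suc j) < size_q j" using shrinks j(1) m(1) by simp
  moreover have "size_q (Suc j) = size_q j" using m(2)[of j] m(2)[of "Suc j"] j(1) by simp
  ultimately show False by simp
qed

lemma just_receiver_moves:
  assumes path: "is_path s tr \<infinity>" and just: "just s tr \<infinity>" and st: "step (s k) (Com p' l p) J N'"
  shows "\<exists>j\<ge>k. p \<in> comp (fst (tr j))"
proof (rule ccontr)
  assume "\<not> ?thesis"
  then have idle: "\<And>j. k \<le> j \<Longrightarrow> p \<notin> comp (fst (tr j))" by blast
  obtain i Q where sender: "s k p' = Some (Snd i p l Q)" using st by cases auto
  have sender_idle: "p' \<notin> comp (fst (tr j))" if "k \<le> j" "s j p' = Some (Snd i p l Q)" for j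
  proof
    assume "p' \<in> comp (fst (tr j))"
    then have "p \<in> comp (fst (tr j))"
      using step_Snd_partner[OF path_infinite_step[OF path] that(2)] by blast
    then show False using idle that(1) by blast
  qed
  have waiting: "s j p' = Some (Snd i p l Q)" if "k \<le> j" for j
    using that
  proof (induction j rule: dec_induct)
    case (step j)
    then show ?case using sender_idle step_untouched[OF path_infinite_step[OF path]] by simp
  qed (rule sender)
  obtain j where "j \<ge> k" "comp (fst (tr j)) \<inter> {p', p} \<noteq> {}"
    using just_infiniteD[OF just st] by auto
  then show False using idle sender_idle waiting by blast
qed

lemma just_enabled_location_moves:
  assumes path: "is_path s tr \<infinity>" and just: "just s tr \<infinity>"
    and enabled: "\<And>j. k \<le> j \<Longrightarrow> \<exists>a J N'. step (s j) a J N' \<and> p \<in> comp a"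
  shows "\<exists>j\<ge>k. p \<in> comp (fst (tr j))"
proof -
  obtain a J N' where st: "step (s k) a J N'" and p: "p \<in> comp a" using enabled by blast
  from st show ?thesis
  proof cases
    case (choice p0 bs k' i q l P)
    then show ?thesis using just_infiniteD[OF just st] p by auto
  next
    case (unfold p0 i x P)
    then show ?thesis using just_infiniteD[OF just st] p by auto
  next
    case (comm p0 q0 i l Q bs k' j P)
    then consider "p = p0" | "p = q0" using p by auto
    then show ?thesis
    proof cases
      case 1
      then show ?thesis using just_sender_moves[OF path just enabled] comm by simp
    next
      case 2
      then show ?thesis using just_receiver_moves[OF path just] st comm by simp
    qed
  qed
qed

lemma perp_enabled_path_infinite:
  assumes "is_path s tr n" "enat k \<le> n" "perp_enabled s n k I"
  shows "n = \<infinity>"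
proof (rule ccontr)
  assume "n \<noteq> \<infinity>"
  then obtain m where m: "n = enat m" by (cases n) auto
  then have "enabled I (s m)" using assms(2,3) unfolding perp_enabled_def by auto
  then show False using assms(1) m unfolding is_path_def enabled_def by blast
qed

lemma unengaged_instr_location_idle:
  assumes wf: "wf_net (s 0)" and path: "is_path s tr \<infinity>"
    and enabled: "\<And>j. k \<le> j \<Longrightarrow> enabled I (s j)" and unengaged: "\<And>j. k \<le> j \<Longrightarrow> I \<notin> snd (tr j)"
    and loc: "s k p = Some T" "I \<in> set (tags T)" and "k \<le> j"
  shows "p \<notin> comp (fst (tr j))"
proof
  assume moves: "p \<in> comp (fst (tr j))"
  have inv: "reachable_inv (s 0) (s i)" for i using path_reachable_inv[OF wf path] by simp
  have top: "\<exists>T'. s i p = Some T' \<and> I \<in> top_tags T'" if i: "k \<le> i" for i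
  proof -
    obtain a J N' where "step (s i) a J N'" "I \<in> J" using enabled[OF i] unfolding enabled_def by blast
    then show ?thesis using step_instr_location[OF wf inv inv loc] by blast
  qed
  obtain T1 where T1: "s j p = Some T1" "I \<in> top_tags T1" using top \<open>k \<le> j\<close> by blast
  obtain T2 where T2: "s (Suc j) p = Some T2" "I \<in> top_tags T2" using top \<open>k \<le> j\<close> le_SucI by blast
  have "coherent T1" using inv[of j] T1(1) unfolding reachable_inv_def by blast
  then show False
    using step_drops_top_tag[OF path_infinite_step[OF path] _ T1 unengaged[OF \<open>k \<le> j\<close>] moves T2(1)] T2(2)
    by blast
qed

lemma just_imp_WI_fair:
  assumes wf: "wf_net (s 0)" and path: "is_path s tr n" and just: "just s tr n"
  shows "WI_fair s tr n"
  unfolding WI_fair_def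
proof (intro allI impI)
  fix k I assume k: "enat k \<le> n" and perp: "perp_enabled s n k I"
  have inf: "n = \<infinity>" using perp_enabled_path_infinite[OF path k perp] .
  show "engaged tr n k I"
  proof (rule ccontr)
    assume "\<not> engaged tr n k I"
    then have unengaged: "\<And>j. k \<le> j \<Longrightarrow> I \<notin> snd (tr j)" using inf unfolding engaged_def by auto
    have enabled: "\<And>j. k \<le> j \<Longrightarrow> enabled I (s j)" using perp inf unfolding perp_enabled_def by auto
    obtain a J N' where st: "step (s k) a J N'" "I \<in> J" using enabled[of k] unfolding enabled_def by blast
    obtain p T where loc: "s k p = Some T" and top: "I \<in> top_tags T" using step_instr_top[OF st] by blast
    have loc_tag: "I \<in> set (tags T)" using top_tags_subset_tags top ..
    have inv: "reachable_inv (s 0) (s j)" for j using path_reachable_inv[OF wf path] inf by simp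
    have "\<exists>a J N'. step (s j) a J N' \<and> p \<in> comp a" if j: "k \<le> j" for j
    proof -
      obtain a J N' where "step (s j) a J N'" "I \<in> J" using enabled[OF j] unfolding enabled_def by blast
      then show ?thesis using step_instr_location[OF wf inv inv loc loc_tag] by blast
    qed
    then obtain j where "j \<ge> k" "p \<in> comp (fst (tr j))"
      using just_enabled_location_moves[OF path[unfolded inf] just[unfolded inf]] by blast
    then show False
      using unengaged_instr_location_idle[OF wf path[unfolded inf] enabled unengaged loc loc_tag] by blast
  qed
qed

theorem mainTheorem15:
  fixes s :: "nat \<Rightarrow> ('p, 'l, 't) net"
    and tr :: "nat \<Rightarrow> ('p, 'l) act \<times> 't set"
    and n :: enat
  assumes "wf_net (s 0)"
    and "is_path s tr n"
  shows "WI_fair s tr n \<longleftrightarrow> just s tr n"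
  using WI_fair_imp_just[OF assms] just_imp_WI_fair[OF assms] by blast
end
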